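(* Let $\varepsilon>0$, $\theta_0>0$, $\Delta t>0$, $N\in\mathbb{N}$, $h=L/N$, and assume the mobility is constant, $\mathcal{M}\equiv 1$. Consider the scheme: given $\phi^n\in\mathcal{C}_{\rm per}$, find $\phi^{n+1},\mu^{n+1}\in\mathcal{C}_{\rm per}$ with $$\frac{\phi^{n+1}-\phi^n}{\Delta t}=-\mu^{n+1},\qquad \mu^{n+1}=\ln(1+\phi^{n+1})-\ln(1-\phi^{n+1})-\theta_0\phi^n-\varepsilon^2\Delta_h\phi^{n+1}$$ (all operations pointwise on the grid except $\Delta_h$). Given $\phi^n\in\mathcal{C}_{\rm per}$ with $\|\phi^n\|_\infty\le M$ for some $M>0$, there exists a unique solution $\phi^{n+1}\in\mathcal{C}_{\rm per}$ of this scheme with $\|\phi^{n+1}\|_\infty<1$. Moreover, if the initial data satisfy $\|\phi^0\|_\infty\le 1-\delta_0$ for some $\delta_0\in(0,1)$, then there exists $\delta^\star\in(0,1)$, depending upon $\delta_0$ but independent of $\varepsilon$ and $n$, such that the iterates of the scheme satisfy $\|\phi^n\|_\infty\le 1-\delta^\star$ for all $n\in\mathbb{N}$.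
   Context: $\Omega=(0,L)^3$ with periodic boundary conditions. Grid points $p_i=(i-\tfrac12)h$, $h=L/N$. $\mathcal{C}_{\rm per}$ is the space of real grid functions $\nu_{i,j,k}$ on the cell centers $(p_i,p_j,p_k)$, $i,j,k\in\mathbb{Z}$, that are $N$-periodic in each index. The discrete Laplacian is $\Delta_h\nu_{i,j,k}=h^{-2}(\nu_{i+1,j,k}+\nu_{i-1,j,k}+\nu_{i,j+1,k}+\nu_{i,j-1,k}+\nu_{i,j,k+1}+\nu_{i,j,k-1}-6\nu_{i,j,k})$. $\|\nu\|_\infty=\max_{1\le i,j,k\le N}|\nu_{i,j,k}|$. The scheme is a discretization of the Allen–Cahn equation with the Flory–Huggins energy $\int_\Omega (1+\phi)\ln(1+\phi)+(1-\phi)\ln(1-\phi)-\frac{\theta_0}{2}\phi^2+\frac{\varepsilon^2}{2}|\nabla\phi|^2$. *)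

theory Defs
  imports Complex_Main
begin

type_synonym grid = "int \<Rightarrow> int \<Rightarrow> int \<Rightarrow> real"

definition per :: "nat \<Rightarrow> grid \<Rightarrow> bool" where
  "per N \<nu> \<longleftrightarrow> (\<forall>i j k. \<nu> (i + int N) j k = \<nu> i j k \<and> \<nu> i (j + int N) k = \<nu> i j k
                      \<and> \<nu> i j (k + int N) = \<nu> i j k)"

definition lap_h :: "real \<Rightarrow> grid \<Rightarrow> grid" where
  "lap_h h \<nu> i j k = (\<nu> (i+1) j k + \<nu> (i-1) j k + \<nu> i (j+1) k + \<nu> i (j-1) k
       + \<nu> i j (k+1) + \<nu> i j (k-1) - 6 * \<nu> i j k) / h\<^sup>2"

definition sup_norm :: "nat \<Rightarrow> grid \<Rightarrow> real" where
  "sup_norm N \<nu> = Max {\<bar>\<nu> i j k\<bar> | i j k. i \<in> {1..int N} \<and> j \<in> {1..int N} \<and> k \<in> {1..int N}}"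

definition chem_pot :: "real \<Rightarrow> real \<Rightarrow> real \<Rightarrow> grid \<Rightarrow> grid \<Rightarrow> grid" where
  "chem_pot eps theta0 h \<phi>n \<phi>' i j k =
     ln (1 + \<phi>' i j k) - ln (1 - \<phi>' i j k) - theta0 * \<phi>n i j k - eps\<^sup>2 * lap_h h \<phi>' i j k"

definition scheme_step :: "real \<Rightarrow> real \<Rightarrow> real \<Rightarrow> real \<Rightarrow> grid \<Rightarrow> grid \<Rightarrow> bool" where
  "scheme_step eps theta0 dt h \<phi>n \<phi>' \<longleftrightarrow>
     (\<forall>i j k. (\<phi>' i j k - \<phi>n i j k) / dt = - chem_pot eps theta0 h \<phi>n \<phi>' i j k)"

end

(* Write the scheme as  phi' + dt (g(phi') - eps^2 Lap_h phi') = (1 + dt theta0) phi^n  with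
   g(x) = ln(1 + x) - ln(1 - x) = 2 artanh x.  Since g is increasing and Lap_h v <= 0 at a maximum
   of v, the left-hand side obeys a comparison principle among periodic grid functions with values
   in (-1, 1).  This gives uniqueness, and comparison with the constants +-m, where
   tanh(theta0/2) <= m < 1 so that g(m) >= theta0, shows that |phi^n| <= m forces |phi'| <= m;
   hence delta* = min(delta0, 1 - tanh(theta0/2)).  For existence, solve the equation at each grid
   point for the centre value: the resulting map contracts the sup norm by the factor 6c/(1 + 6c),
   c = dt eps^2/h^2, and Banach's fixed point theorem applies on the closed set of periodic bounded
   functions.  No bound on phi^n is needed for existence. *)

theory Submission
  imports Defs "HOL-Analysis.Bounded_Continuous_Function"
begin

lemma periodic_add_mult:
  fixes f :: "int \<Rightarrow> 'a"
  assumes "\<And>x. f (x + p) = f x"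
  shows "f (x + m * p) = f x"
proof (induction m rule: int_induct[where k = 0])
  case (step1 m)
  have "x + (m + 1) * p = (x + m * p) + p" by (simp add: distrib_right)
  then show ?case using assms step1 by presburger
next
  case (step2 m)
  have "x + (m - 1) * p + p = x + m * p" by (simp add: left_diff_distrib)
  then show ?case using assms[of "x + (m - 1) * p"] step2 by presburger
qed simp

lemma periodic_eq_mod:
  fixes f :: "int \<Rightarrow> 'a"
  assumes "\<And>x. f (x + p) = f x"
  shows "f x = f ((x - 1) mod p + 1)"
proof -
  have "x = ((x - 1) mod p + 1) + (x - 1) div p * p"
    by (simp add: mod_div_mult_eq algebra_simps)
  then show ?thesis using periodic_add_mult[of f p, OF assms] by metis
qed

definition cube :: "nat \<Rightarrow> (int \<times> int \<times> int) set" where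
  "cube N = {1..int N} \<times> {1..int N} \<times> {1..int N}"

lemma per_cube_representative:
  assumes "per N v" "N > 0"
  obtains i' j' k' where "(i', j', k') \<in> cube N" "v i j k = v i' j' k'"
proof
  have "(x - 1) mod int N + 1 \<in> {1..int N}" for x
  proof -
    have "0 \<le> (x - 1) mod int N" "(x - 1) mod int N < int N"
      using \<open>N > 0\<close> by simp_all
    then show ?thesis by simp
  qed
  then show "((i - 1) mod int N + 1, (j - 1) mod int N + 1, (k - 1) mod int N + 1) \<in> cube N"
    by (simp add: cube_def)
  let ?r = "\<lambda>x. (x - 1) mod int N + 1"
  have "v i j k = v (?r i) j k"
    by (rule periodic_eq_mod[of "\<lambda>i. v i j k"]) (use assms(1) in \<open>simp add: per_def\<close>)
  also have "\<dots> = v (?r i) (?r j) k"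
    by (rule periodic_eq_mod[of "\<lambda>j. v (?r i) j k"]) (use assms(1) in \<open>simp add: per_def\<close>)
  also have "\<dots> = v (?r i) (?r j) (?r k)"
    by (rule periodic_eq_mod[of "\<lambda>k. v (?r i) (?r j) k"]) (use assms(1) in \<open>simp add: per_def\<close>)
  finally show "v i j k = v (?r i) (?r j) (?r k)" .
qed

lemma sup_norm_eq_Max: "sup_norm N v = Max ((\<lambda>(i, j, k). \<bar>v i j k\<bar>) ` cube N)"
  unfolding sup_norm_def cube_def image_def by (rule arg_cong[where f = Max]) fastforce

lemma abs_le_sup_norm:
  assumes "per N v" "N > 0"
  shows "\<bar>v i j k\<bar> \<le> sup_norm N v"
proof -
  obtain i' j' k' where "(i', j', k') \<in> cube N" "v i j k = v i' j' k'"
    using per_cube_representative[OF assms] .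
  then show ?thesis
    unfolding sup_norm_eq_Max by (auto intro!: Max_ge rev_image_eqI[of "(i', j', k')"] simp: cube_def)
qed

lemma sup_norm_le:
  assumes "N > 0" "\<And>i j k. \<bar>v i j k\<bar> \<le> B"
  shows "sup_norm N v \<le> B"
  unfolding sup_norm_eq_Max using assms by (subst Max_le_iff) (auto simp: cube_def)

lemma sup_norm_less:
  assumes "N > 0" "\<And>i j k. \<bar>v i j k\<bar> < B"
  shows "sup_norm N v < B"
  unfolding sup_norm_eq_Max using assms by (subst Max_less_iff) (auto simp: cube_def)

lemma per_attains_max:
  assumes "per N v" "N > 0"
  obtains x y z where "\<And>i j k. v i j k \<le> v x y z"
proof -
  let ?f = "\<lambda>(i, j, k). v i j k"
  have "Max (?f ` cube N) \<in> ?f ` cube N"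
    using \<open>N > 0\<close> by (intro Max_in) (auto simp: cube_def)
  then obtain x y z where max: "Max (?f ` cube N) = v x y z" by auto
  have "v i j k \<le> v x y z" for i j k
  proof -
    obtain i' j' k' where "(i', j', k') \<in> cube N" "v i j k = v i' j' k'"
      using per_cube_representative[OF assms] .
    then show ?thesis
      unfolding max[symmetric] by (auto intro!: Max_ge rev_image_eqI[of "(i', j', k')"] simp: cube_def)
  qed
  then show ?thesis using that by blast
qed

definition nbr_sum :: "grid \<Rightarrow> grid" where
  "nbr_sum v i j k = v (i+1) j k + v (i-1) j k + v i (j+1) k + v i (j-1) k + v i j (k+1) + v i j (k-1)"

lemma lap_h_nbr_sum: "lap_h h v i j k = (nbr_sum v i j k - 6 * v i j k) / h\<^sup>2"
  by (simp add: lap_h_def nbr_sum_def)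

lemma per_nbr_sum:
  assumes "per N v"
  shows "per N (nbr_sum v)"
proof -
  have shift: "x + int N + 1 = (x + 1) + int N" "x + int N - 1 = (x - 1) + int N" for x :: int
    by simp_all
  have "v (x + int N) j k = v x j k" "v i (x + int N) k = v i x k" "v i j (x + int N) = v i j x"
    for i j k x
    using assms by (simp_all add: per_def)
  then show ?thesis
    unfolding per_def nbr_sum_def shift by simp
qed

lemma nbr_sum_lipschitz:
  assumes "\<And>a b c. \<bar>v a b c - w a b c\<bar> \<le> B"
  shows "\<bar>nbr_sum v i j k - nbr_sum w i j k\<bar> \<le> 6 * B"
  using assms[of "i+1" j k] assms[of "i-1" j k] assms[of i "j+1" k] assms[of i "j-1" k]
    assms[of i j "k+1"] assms[of i j "k-1"]
  unfolding nbr_sum_def by (simp add: abs_le_iff)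

lemma lap_h_nonpos_at_max:
  assumes "\<And>a b c. v a b c \<le> v i j k"
  shows "lap_h h v i j k \<le> 0"
proof -
  have "nbr_sum v i j k \<le> 6 * v i j k"
    using assms[of "i+1" j k] assms[of "i-1" j k] assms[of i "j+1" k] assms[of i "j-1" k]
      assms[of i j "k+1"] assms[of i j "k-1"] unfolding nbr_sum_def by linarith
  then show ?thesis
    by (simp add: lap_h_nbr_sum divide_nonpos_nonneg)
qed

lemma lap_h_diff:
  "lap_h h (\<lambda>a b c. v a b c - w a b c) i j k = lap_h h v i j k - lap_h h w i j k"
  unfolding lap_h_def by (simp add: diff_divide_distrib[symmetric] algebra_simps)

lemma lap_h_const: "lap_h h (\<lambda>_ _ _. m) i j k = 0"
  by (simp add: lap_h_def)

section \<open>The logarithmic term\<close>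

definition log_ratio :: "real \<Rightarrow> real" where
  "log_ratio x = ln (1 + x) - ln (1 - x)"

lemma log_ratio_minus: "log_ratio (- x) = - log_ratio x"
  by (simp add: log_ratio_def)

lemma log_ratio_mono:
  assumes "-1 < x" "x \<le> y" "y < 1"
  shows "log_ratio x \<le> log_ratio y"
proof -
  have "ln (1 + x) \<le> ln (1 + y)" "ln (1 - y) \<le> ln (1 - x)"
    using assms by simp_all
  then show ?thesis by (simp add: log_ratio_def)
qed

lemma log_ratio_tanh: "log_ratio (tanh y) = 2 * y"
proof -
  have "log_ratio (tanh y) = ln ((1 + tanh y) / (1 - tanh y))"
    using tanh_real_bounds[of y] by (simp add: log_ratio_def ln_divide_pos)
  also have "\<dots> = 2 * artanh (tanh y)"
    by (simp add: artanh_def)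
  finally show ?thesis by (simp add: artanh_tanh_real)
qed

lemma mult_le_log_ratio:
  assumes "0 \<le> \<theta>" "tanh (\<theta> / 2) \<le> m" "m < 1"
  shows "\<theta> * m \<le> log_ratio m"
proof -
  have "-1 < tanh (\<theta> / 2)" by (rule tanh_real_gt_neg1)
  then have "\<theta> \<le> log_ratio m"
    using log_ratio_mono[of "tanh (\<theta> / 2)" m] log_ratio_tanh[of "\<theta> / 2"] assms by simp
  moreover have "\<theta> * m \<le> \<theta>"
    using assms by (simp add: mult_left_le)
  ultimately show ?thesis by linarith
qed

lemma log_ratio_expansive:
  assumes "0 \<le> K" "0 \<le> dt" "\<bar>x\<bar> < 1" "\<bar>y\<bar> < 1"
  shows "K * \<bar>x - y\<bar> \<le> \<bar>(K * x + dt * log_ratio x) - (K * y + dt * log_ratio y)\<bar>"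
proof -
  have *: "K * (b - a) \<le> (K * b + dt * log_ratio b) - (K * a + dt * log_ratio a)"
    if "a \<le> b" "\<bar>a\<bar> < 1" "\<bar>b\<bar> < 1" for a b
  proof -
    have "dt * log_ratio a \<le> dt * log_ratio b"
      using that assms(2) by (intro mult_left_mono log_ratio_mono) auto
    then show ?thesis by (simp add: algebra_simps)
  qed
  show ?thesis
    using *[of x y] *[of y x] assms by (cases "y \<le> x") (auto simp: abs_if algebra_simps)
qed

lemma log_ratio_resolvent_exists:
  assumes "0 \<le> K" "0 < dt"
  shows "\<exists>x. \<bar>x\<bar> < 1 \<and> K * x + dt * log_ratio x = r"
proof -
  define G where "G y = K * tanh y + 2 * dt * y" for y
  define t where "t = (\<bar>r\<bar> + K) / (2 * dt)"
  have t: "0 \<le> t" "2 * dt * t = \<bar>r\<bar> + K"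
    using assms unfolding t_def by auto
  have bound: "\<bar>K * tanh y\<bar> \<le> K" for y
  proof -
    have "\<bar>tanh y\<bar> \<le> 1"
      using tanh_real_bounds[of y] by (simp add: abs_le_iff)
    then show ?thesis
      using assms(1) by (simp add: abs_mult mult_left_le)
  qed
  have "- K \<le> K * tanh t" "K * tanh t \<le> K"
    using bound[of t] by (simp_all add: abs_le_iff)
  then have "G (- t) \<le> r" "r \<le> G t"
    unfolding G_def using t(2) abs_ge_self[of r] abs_ge_minus_self[of r] by simp_all
  moreover have "continuous_on {- t..t} G"
    unfolding G_def by (intro continuous_intros) simp
  ultimately obtain y where "G y = r"
    using IVT'[of G "- t" r t] t by auto
  then show ?thesis
    using tanh_real_bounds[of y] by (intro exI[of _ "tanh y"]) (simp add: G_def log_ratio_tanh abs_less_iff)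
qed

definition resolvent :: "real \<Rightarrow> real \<Rightarrow> real \<Rightarrow> real" where
  "resolvent K dt r = (THE x. \<bar>x\<bar> < 1 \<and> K * x + dt * log_ratio x = r)"

lemma resolvent_solves:
  assumes "0 < K" "0 < dt"
  shows "\<bar>resolvent K dt r\<bar> < 1" "K * resolvent K dt r + dt * log_ratio (resolvent K dt r) = r"
proof -
  have unique: "\<exists>!x. \<bar>x\<bar> < 1 \<and> K * x + dt * log_ratio x = r"
  proof (rule ex_ex1I)
    fix x y assume "\<bar>x\<bar> < 1 \<and> K * x + dt * log_ratio x = r" "\<bar>y\<bar> < 1 \<and> K * y + dt * log_ratio y = r"
    then show "x = y"
      using log_ratio_expansive[of K dt x y] assms by (simp add: mult_le_0_iff)
  qed (use log_ratio_resolvent_exists assms in auto)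
  then show "\<bar>resolvent K dt r\<bar> < 1" "K * resolvent K dt r + dt * log_ratio (resolvent K dt r) = r"
    unfolding resolvent_def using theI'[OF unique] by auto
qed

lemma resolvent_lipschitz:
  assumes "0 < K" "0 < dt"
  shows "K * \<bar>resolvent K dt r - resolvent K dt s\<bar> \<le> \<bar>r - s\<bar>"
  using log_ratio_expansive[of K dt "resolvent K dt r" "resolvent K dt s"] resolvent_solves[OF assms] assms
  by simp

section \<open>Comparison principle and maximum bound\<close>

definition scheme_lhs :: "real \<Rightarrow> real \<Rightarrow> real \<Rightarrow> grid \<Rightarrow> grid" where
  "scheme_lhs dt eps h v i j k = v i j k + dt * log_ratio (v i j k) - dt * eps\<^sup>2 * lap_h h v i j k"

lemma scheme_step_iff:
  assumes "dt > 0"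
  shows "scheme_step eps \<theta> dt h p v \<longleftrightarrow>
    (\<forall>i j k. scheme_lhs dt eps h v i j k = (1 + dt * \<theta>) * p i j k)"
proof -
  have "scheme_lhs dt eps h v i j k - (1 + dt * \<theta>) * p i j k
      = v i j k - p i j k + dt * chem_pot eps \<theta> h p v i j k" for i j k
    by (simp add: chem_pot_def scheme_lhs_def log_ratio_def algebra_simps)
  then have "(v i j k - p i j k) / dt = - chem_pot eps \<theta> h p v i j k
      \<longleftrightarrow> scheme_lhs dt eps h v i j k = (1 + dt * \<theta>) * p i j k" for i j k
    using assms by (auto simp: divide_eq_eq algebra_simps)
  then show ?thesis
    unfolding scheme_step_def by blast
qed

lemma scheme_lhs_comparison:
  assumes "N > 0" "per N v" "per N w" "dt \<ge> 0"
    and "\<And>i j k. \<bar>v i j k\<bar> < 1" "\<And>i j k. \<bar>w i j k\<bar> < 1"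
    and le: "\<And>i j k. scheme_lhs dt eps h v i j k \<le> scheme_lhs dt eps h w i j k"
  shows "v i j k \<le> w i j k"
proof -
  define d where "d = (\<lambda>a b c. v a b c - w a b c)"
  have "per N d"
    using assms(2,3) by (simp add: per_def d_def)
  then obtain x y z where dmax: "\<And>a b c. d a b c \<le> d x y z"
    using per_attains_max \<open>N > 0\<close> by blast
  have "d x y z \<le> 0"
  proof (rule ccontr)
    assume "\<not> d x y z \<le> 0"
    then have "w x y z < v x y z" by (simp add: d_def)
    then have "dt * log_ratio (w x y z) \<le> dt * log_ratio (v x y z)"
      using assms(4) assms(5,6)[of x y z] by (intro mult_left_mono log_ratio_mono) (auto simp: abs_less_iff)
    moreover have "lap_h h v x y z - lap_h h w x y z \<le> 0"
      using lap_h_nonpos_at_max[of d x y z h, OF dmax] by (simp add: d_def lap_h_diff)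
    then have "dt * eps\<^sup>2 * lap_h h v x y z \<le> dt * eps\<^sup>2 * lap_h h w x y z"
      using assms(4) by (simp add: mult_left_mono)
    ultimately have "scheme_lhs dt eps h w x y z < scheme_lhs dt eps h v x y z"
      using \<open>w x y z < v x y z\<close> by (simp add: scheme_lhs_def)
    then show False using le[of x y z] by simp
  qed
  then show ?thesis
    using dmax[of i j k] by (simp add: d_def)
qed

lemma scheme_lhs_const: "scheme_lhs dt eps h (\<lambda>_ _ _. m) i j k = m + dt * log_ratio m"
  by (simp add: scheme_lhs_def lap_h_const)

lemma scheme_step_unique:
  assumes "N > 0" "dt > 0" "per N v" "per N w"
    and "\<And>i j k. \<bar>v i j k\<bar> < 1" "\<And>i j k. \<bar>w i j k\<bar> < 1"
    and "scheme_step eps \<theta> dt h p v" "scheme_step eps \<theta> dt h p w"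
  shows "v = w"
proof -
  have eq: "scheme_lhs dt eps h v i j k = scheme_lhs dt eps h w i j k" for i j k
    using assms(7,8) by (simp add: scheme_step_iff[OF \<open>dt > 0\<close>])
  have "v i j k \<le> w i j k" "w i j k \<le> v i j k" for i j k
    using scheme_lhs_comparison[of N v w dt eps h] scheme_lhs_comparison[of N w v dt eps h]
      assms(1-6) eq by auto
  then show ?thesis by (intro ext antisym)
qed

lemma scheme_step_bound:
  assumes "N > 0" "dt > 0" "\<theta> \<ge> 0" "per N v"
    and "\<And>i j k. \<bar>v i j k\<bar> < 1" "scheme_step eps \<theta> dt h p v"
    and "\<And>i j k. \<bar>p i j k\<bar> \<le> m" "tanh (\<theta> / 2) \<le> m" "m < 1"
  shows "\<bar>v i j k\<bar> \<le> m"
proof -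
  have m: "-1 < m" "0 \<le> m"
    using assms(7)[of 0 0 0] by auto
  \<comment> \<open>the constants \<open>\<plusminus>m\<close> are a super- and a subsolution\<close>
  have super: "(1 + dt * \<theta>) * m \<le> m + dt * log_ratio m"
    using mult_le_log_ratio[OF assms(3,8,9)] assms(2) mult_left_mono[of "\<theta> * m" "log_ratio m" dt]
    by (simp add: algebra_simps)
  have sub_super: "- m - dt * log_ratio m \<le> (1 + dt * \<theta>) * p i j k"
      "(1 + dt * \<theta>) * p i j k \<le> m + dt * log_ratio m" for i j k
  proof -
    have "(1 + dt * \<theta>) * p i j k \<le> (1 + dt * \<theta>) * m"
      using assms(2,3) assms(7)[of i j k] by (intro mult_left_mono) (auto simp: abs_le_iff)
    moreover have "(1 + dt * \<theta>) * (- m) \<le> (1 + dt * \<theta>) * p i j k"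
      using assms(2,3) assms(7)[of i j k] by (intro mult_left_mono) (auto simp: abs_le_iff)
    ultimately show "- m - dt * log_ratio m \<le> (1 + dt * \<theta>) * p i j k"
      "(1 + dt * \<theta>) * p i j k \<le> m + dt * log_ratio m"
      using super by simp_all
  qed
  have lhs: "scheme_lhs dt eps h v i j k = (1 + dt * \<theta>) * p i j k" for i j k
    using assms(6) by (simp add: scheme_step_iff[OF \<open>dt > 0\<close>])
  have const: "per N (\<lambda>_ _ _. c)" "\<bar>c\<bar> < 1 \<Longrightarrow> \<bar>(\<lambda>_ _ _. c) i j k\<bar> < 1" for c :: real and i j k
    by (simp_all add: per_def)
  have "v i j k \<le> m"
    using scheme_lhs_comparison[of N v "\<lambda>_ _ _. m" dt eps h] assms(1,2,4,5) m assms(9) const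
      lhs sub_super(2) by (simp add: scheme_lhs_const)
  moreover have "- m \<le> v i j k"
    using scheme_lhs_comparison[of N "\<lambda>_ _ _. - m" v dt eps h] assms(1,2,4,5) m assms(9) const
      lhs sub_super(1) by (simp add: scheme_lhs_const log_ratio_minus)
  ultimately show ?thesis by simp
qed

section \<open>Existence by contraction\<close>

text \<open>With the discrete topology on the index lattice every grid function is continuous.\<close>

instance prod :: (discrete_topology, discrete_topology) discrete_topology
proof
  fix A :: "('a \<times> 'b) set"
  have "open (\<Union>x\<in>A. {fst x} \<times> {snd x})"
    by (intro open_UN ballI open_Times open_discrete)
  moreover have "(\<Union>x\<in>A. {fst x} \<times> {snd x}) = A" by auto
  ultimately show "open A" by simp
qed

text \<open>The library's completeness instance for bounded continuous functions asks for a metric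
  domain, which the index lattice \<open>int \<times> int \<times> int\<close> is not.\<close>

lemma complete_UNIV_bcontfun: "complete (UNIV :: ('a::topological_space \<Rightarrow>\<^sub>C 'b::complete_space) set)"
  unfolding complete_def
proof safe
  fix f :: "nat \<Rightarrow> 'a \<Rightarrow>\<^sub>C 'b"
  assume "Cauchy f"
  then obtain g where "uniform_limit UNIV f g sequentially"
    using uniformly_convergent_eq_cauchy[of "\<lambda>_. True" f]
    unfolding Cauchy_def uniform_limit_sequentially_iff by (metis dist_fun_lt_imp_dist_val_lt)
  then obtain l where "f \<longlonglongrightarrow> l"
    by (rule uniform_limit_bcontfunE[OF _ sequentially_bot])
  then show "\<exists>l\<in>UNIV. f \<longlonglongrightarrow> l"
    by blast
qed

lemma continuous_on_apply_bcontfun_at: "continuous_on S (\<lambda>f. apply_bcontfun f x)"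
  unfolding continuous_on_iff using dist_bounded le_less_trans by blast

lemma per_grid_contraction_fixed_point:
  fixes F :: "grid \<Rightarrow> grid"
  assumes bounded: "\<And>v i j k. \<bar>F v i j k\<bar> \<le> R"
    and contraction: "\<And>v w B i j k. (\<And>a b c. \<bar>v a b c - w a b c\<bar> \<le> B) \<Longrightarrow>
      \<bar>F v i j k - F w i j k\<bar> \<le> q * B"
    and "0 \<le> q" "q < 1"
    and periodic: "\<And>v. per N v \<Longrightarrow> per N (F v)"
  shows "\<exists>v. per N v \<and> F v = v"
proof -
  define grid_of :: "((int \<times> int \<times> int) \<Rightarrow>\<^sub>C real) \<Rightarrow> grid" where
    "grid_of u = (\<lambda>i j k. apply_bcontfun u (i, j, k))" for u
  define T where "T u = Bcontfun (\<lambda>(i, j, k). F (grid_of u) i j k)" for u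
  have T: "grid_of (T u) = F (grid_of u)" for u
  proof -
    have "(\<lambda>(i, j, k). F (grid_of u) i j k) \<in> bcontfun"
      using bounded by (intro bcontfun_normI[where b = R]) auto
    then show ?thesis
      by (simp add: T_def grid_of_def Bcontfun_inverse)
  qed
  define P where "P = {u. per N (grid_of u)}"
  have "closed P"
    unfolding P_def per_def grid_of_def
    by (intro closed_Collect_all closed_Collect_conj closed_Collect_eq continuous_on_apply_bcontfun_at)
  then have "complete P"
    by (rule complete_closed_subset[OF _ subset_UNIV complete_UNIV_bcontfun])
  moreover have "P \<noteq> {}"
    by (auto simp: P_def per_def grid_of_def intro!: exI[of _ 0])
  moreover have "T ` P \<subseteq> P"
    using periodic by (auto simp: P_def T)
  moreover have "dist (T u) (T w) \<le> q * dist u w" for u w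
  proof (rule dist_bound)
    fix x :: "int \<times> int \<times> int"
    obtain i j k where x: "x = (i, j, k)"
      by (cases x) auto
    have "\<bar>grid_of u a b c - grid_of w a b c\<bar> \<le> dist u w" for a b c
      using dist_bounded[where f = u and g = w and x = "(a, b, c)"] by (simp add: grid_of_def dist_real_def)
    then have "\<bar>F (grid_of u) i j k - F (grid_of w) i j k\<bar> \<le> q * dist u w"
      by (rule contraction)
    then show "dist (apply_bcontfun (T u) x) (apply_bcontfun (T w) x) \<le> q * dist u w"
      using T[of u] T[of w] by (simp add: x dist_real_def grid_of_def fun_eq_iff)
  qed
  ultimately obtain u where "u \<in> P" "T u = u"
    using Banach_fix[of P q T] \<open>0 \<le> q\<close> \<open>q < 1\<close> by blast
  then show ?thesis
    using T[of u] by (auto simp: P_def)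
qed

lemma scheme_lhs_surjective:
  assumes "dt > 0" "per N b"
  shows "\<exists>v. per N v \<and> (\<forall>i j k. \<bar>v i j k\<bar> < 1 \<and> scheme_lhs dt eps h v i j k = b i j k)"
proof -
  define c where "c = dt * eps\<^sup>2 / h\<^sup>2"
  define K where "K = 1 + 6 * c"
  have "0 \<le> c"
    using assms(1) by (simp add: c_def)
  then have "0 < K"
    by (simp add: K_def)
  note res = resolvent_solves[OF \<open>0 < K\<close> \<open>0 < dt\<close>]
  have lhs_eq: "scheme_lhs dt eps h v i j k = K * v i j k + dt * log_ratio (v i j k) - c * nbr_sum v i j k"
    for v i j k
    by (simp add: scheme_lhs_def lap_h_nbr_sum K_def c_def diff_divide_distrib algebra_simps)
  \<comment> \<open>solving for the centre value turns the scheme into a fixed-point problem, with contraction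
    factor \<open>6 c / K\<close> for the sup norm\<close>
  define F where "F v i j k = resolvent K dt (b i j k + c * nbr_sum v i j k)" for v i j k
  have "\<exists>v. per N v \<and> F v = v"
  proof (rule per_grid_contraction_fixed_point)
    show "\<bar>F v i j k\<bar> \<le> 1" for v i j k
      using res(1) by (simp add: F_def less_imp_le)
    show "\<bar>F v i j k - F w i j k\<bar> \<le> 6 * c / K * B"
      if "\<And>x y z. \<bar>v x y z - w x y z\<bar> \<le> B" for v w B i j k
    proof -
      have "K * \<bar>F v i j k - F w i j k\<bar> \<le> \<bar>c * nbr_sum v i j k - c * nbr_sum w i j k\<bar>"
        using resolvent_lipschitz[OF \<open>0 < K\<close> \<open>0 < dt\<close>,
            of "b i j k + c * nbr_sum v i j k" "b i j k + c * nbr_sum w i j k"]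
        by (simp add: F_def)
      also have "\<dots> = c * \<bar>nbr_sum v i j k - nbr_sum w i j k\<bar>"
        using \<open>0 \<le> c\<close> by (simp add: abs_mult right_diff_distrib[symmetric])
      also have "\<dots> \<le> c * (6 * B)"
        using nbr_sum_lipschitz[OF that] \<open>0 \<le> c\<close> by (rule mult_left_mono)
      finally show ?thesis
        using \<open>0 < K\<close> by (simp add: field_simps)
    qed
    show "per N (F v)" if "per N v" for v
      using per_nbr_sum[OF that] assms(2) by (simp add: per_def F_def)
  qed (use \<open>0 \<le> c\<close> \<open>0 < K\<close> in \<open>simp_all add: K_def\<close>)
  then obtain v where "per N v" "F v = v"
    by blast
  moreover have "\<bar>v i j k\<bar> < 1" "scheme_lhs dt eps h v i j k = b i j k" for i j k
    using res[of "b i j k + c * nbr_sum v i j k"] \<open>F v = v\<close>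
    by (auto simp: lhs_eq F_def fun_eq_iff)
  ultimately show ?thesis
    by blast
qed

lemma scheme_step_ex1:
  assumes "N > 0" "dt > 0" "per N p"
  shows "\<exists>!v. per N v \<and> sup_norm N v < 1 \<and> scheme_step eps \<theta> dt h p v"
proof -
  have "per N (\<lambda>i j k. (1 + dt * \<theta>) * p i j k)"
    using assms(3) by (simp add: per_def)
  then obtain v where v: "per N v" "\<And>i j k. \<bar>v i j k\<bar> < 1"
      "\<And>i j k. scheme_lhs dt eps h v i j k = (1 + dt * \<theta>) * p i j k"
    using scheme_lhs_surjective[OF \<open>dt > 0\<close>] by blast
  then have step: "scheme_step eps \<theta> dt h p v"
    by (simp add: scheme_step_iff[OF \<open>dt > 0\<close>])
  show ?thesis
  proof (rule ex1I[of _ v])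
    show "per N v \<and> sup_norm N v < 1 \<and> scheme_step eps \<theta> dt h p v"
      using v(1) sup_norm_less[OF \<open>N > 0\<close>, of v] v(2) step by blast
  next
    fix w
    assume w: "per N w \<and> sup_norm N w < 1 \<and> scheme_step eps \<theta> dt h p w"
    then have "\<bar>w i j k\<bar> < 1" for i j k
      using abs_le_sup_norm[of N w i j k] \<open>N > 0\<close> by linarith
    then show "w = v"
      using scheme_step_unique[OF \<open>N > 0\<close> \<open>dt > 0\<close>] w v(1,2) step by blast
  qed
qed

lemma scheme_step_sup_norm_le:
  assumes "N > 0" "dt > 0" "\<theta> \<ge> 0" "per N p" "per N v" "sup_norm N v < 1"
    and "scheme_step eps \<theta> dt h p v" "sup_norm N p \<le> m" "tanh (\<theta> / 2) \<le> m" "m < 1"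
  shows "sup_norm N v \<le> m"
proof (rule sup_norm_le[OF \<open>N > 0\<close>])
  fix i j k
  show "\<bar>v i j k\<bar> \<le> m"
  proof (rule scheme_step_bound[OF assms(1-3,5) _ assms(7) _ assms(9,10)])
    show "\<bar>v a b c\<bar> < 1" for a b c
      using abs_le_sup_norm[OF assms(5,1)] assms(6) by (meson le_less_trans)
    show "\<bar>p a b c\<bar> \<le> m" for a b c
      using abs_le_sup_norm[OF assms(4,1)] assms(8) by (meson order_trans)
  qed
qed

lemma scheme_iterates_sup_norm_le:
  assumes "N > 0" "dt > 0" "\<theta> \<ge> 0" "tanh (\<theta> / 2) \<le> m" "m < 1"
    and "per N (\<phi> 0)" "sup_norm N (\<phi> 0) \<le> m"
    and "\<And>n. per N (\<phi> (Suc n)) \<and> sup_norm N (\<phi> (Suc n)) < 1 \<and>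
      scheme_step eps \<theta> dt h (\<phi> n) (\<phi> (Suc n))"
  shows "sup_norm N (\<phi> n) \<le> m"
proof (induction n)
  case (Suc n)
  have "per N (\<phi> n)"
    using assms(6,8) by (cases n) auto
  then show ?case
    using scheme_step_sup_norm_le[OF assms(1-3) _ _ _ _ Suc.IH assms(4,5)] assms(8)[of n] by blast
qed (use assms(7) in simp)

theorem theorem2p2:
  fixes theta0 dt L :: real and N :: nat
  assumes "theta0 > 0" and "dt > 0" and "L > 0" and "N > 0"
  shows "(\<forall>eps M :: real. \<forall>\<phi>n. eps > 0 \<and> M > 0 \<and> per N \<phi>n \<and> sup_norm N \<phi>n \<le> M \<longrightarrow>
            (\<exists>!\<phi>'. per N \<phi>' \<and> sup_norm N \<phi>' < 1 \<and> scheme_step eps theta0 dt (L / real N) \<phi>n \<phi>'))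
       \<and> (\<forall>delta0 :: real. 0 < delta0 \<and> delta0 < 1 \<longrightarrow>
            (\<exists>dstar :: real. 0 < dstar \<and> dstar < 1 \<and>
              (\<forall>eps :: real. \<forall>\<phi> :: nat \<Rightarrow> grid.
                 eps > 0 \<and> per N (\<phi> 0) \<and> sup_norm N (\<phi> 0) \<le> 1 - delta0 \<and>
                 (\<forall>n. per N (\<phi> (Suc n)) \<and> sup_norm N (\<phi> (Suc n)) < 1 \<and>
                       scheme_step eps theta0 dt (L / real N) (\<phi> n) (\<phi> (Suc n)))
                 \<longrightarrow> (\<forall>n. sup_norm N (\<phi> n) \<le> 1 - dstar))))"
proof (intro conjI allI impI)
  fix eps M :: real and \<phi>n :: grid
  assume "eps > 0 \<and> M > 0 \<and> per N \<phi>n \<and> sup_norm N \<phi>n \<le> M"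
  then show "\<exists>!\<phi>'. per N \<phi>' \<and> sup_norm N \<phi>' < 1 \<and> scheme_step eps theta0 dt (L / real N) \<phi>n \<phi>'"
    using scheme_step_ex1[OF \<open>N > 0\<close> \<open>dt > 0\<close>] by blast
next
  fix delta0 :: real
  assume "0 < delta0 \<and> delta0 < 1"
  define dstar where "dstar = min delta0 (1 - tanh (theta0 / 2))"
  have "0 < tanh (theta0 / 2)" "tanh (theta0 / 2) < 1"
    using \<open>theta0 > 0\<close> tanh_real_lt_1 by auto
  then have dstar: "0 < dstar" "dstar < 1" "1 - delta0 \<le> 1 - dstar" "tanh (theta0 / 2) \<le> 1 - dstar"
    using \<open>0 < delta0 \<and> delta0 < 1\<close> by (auto simp: dstar_def)
  show "\<exists>dstar. 0 < dstar \<and> dstar < 1 \<and>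
      (\<forall>eps \<phi>. eps > 0 \<and> per N (\<phi> 0) \<and> sup_norm N (\<phi> 0) \<le> 1 - delta0 \<and>
         (\<forall>n. per N (\<phi> (Suc n)) \<and> sup_norm N (\<phi> (Suc n)) < 1 \<and>
               scheme_step eps theta0 dt (L / real N) (\<phi> n) (\<phi> (Suc n)))
         \<longrightarrow> (\<forall>n. sup_norm N (\<phi> n) \<le> 1 - dstar))"
    by (intro exI[of _ dstar] conjI dstar(1,2) allI impI,
        rule scheme_iterates_sup_norm_le[OF \<open>N > 0\<close> \<open>dt > 0\<close> _ dstar(4)])
      (use \<open>theta0 > 0\<close> dstar(1,3) in auto)
qed

end
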